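(* Let $A$ be an enriched matrix. If $A$ admits a suitable LR-ordering, then $A$ contains none of the following enriched matrices (all of whose rows are unlabeled and uncolored) as a subconfiguration: $M_0=\begin{pmatrix}1&0&1&1\\1&1&1&0\\0&1&1&1\end{pmatrix}$, $M_{II}(4)=\begin{pmatrix}0&1&1&1\\1&1&0&0\\0&1&1&0\\1&1&0&1\end{pmatrix}$, $M_V=\begin{pmatrix}1&1&0&0&0\\0&0&1&1&0\\1&1&1&1&0\\1&0&0&1&1\end{pmatrix}$, and $S_0(k)$ for any even $k\geq 4$, where $S_0(k)$ is the $(k+1)\times k$ $(0,1)$-matrix whose first row has a $1$ in every column, whose $(j+1)$-th row, for $j=1,\dots,k-1$, has $1$'s exactly in columns $j$ and $j+1$, and whose last row has $1$'s exactly in columns $1$ and $k$.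
   Context: Rows of a $(0,1)$-matrix are identified with the set of columns in which they have a $1$; a row is empty if it has no $1$. An enriched matrix is a $(0,1)$-matrix together with an assignment of labels and colors to some (possibly none) of its rows such that: each row is either unlabeled or labeled with one of L, R, LR (an LR-row, L-row, R-row is a row labeled LR, L, R respectively); each row is either uncolored or colored red or blue; the only rows that may be colored are those labeled L or R and the empty LR-rows; and all empty LR-rows are colored with the same color. A row is a non-LR-row if it is not an LR-row. An LR-ordering of an enriched matrix $A$ is a linear ordering $\Pi$ of its columns such that: (1) in $\Pi$ the $1$'s of every non-LR-row appear consecutively; (2) the $1$'s of every nonempty L-row start in the first column of $\Pi$, and the $1$'s of every nonempty R-row end in the last column of $\Pi$; (3) in $\Pi$ the $1$'s of the complement of every LR-row (obtained by interchanging $0$'s and $1$'s) appear consecutively. Blocks with respect to an LR-ordering $\Pi$: for each row labeled L or LR having a $1$ in the first column of $\Pi$, its L-block is the maximal set of consecutive columns of $\Pi$, starting in the first column, on which the row has a $1$; R-blocks are defined analogously for rows labeled R or LR having a $1$ in the last column of $\Pi$ (maximal set of consecutive columns ending in the last column on which the row has a $1$); for each unlabeled row, its U-block is the set of columns in which it has a $1$. An LR-ordering is suitable if: the L-blocks of those LR-rows with exactly two blocks are disjoint from every R-block; the R-blocks of those LR-rows with exactly two blocks are disjoint from every L-block; and for each LR-row and each U-block, the U-block has empty intersection with either the L-block or the R-block of that LR-row. For enriched matrices $A$ and $B$, $B$ is a subconfiguration of $A$ if $B$ equals some submatrix of $A$ up to permutations of rows and/or columns, with the labels and colors of the rows remaining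 the same. *)

theory Defs
  imports Main
begin

datatype label = LabL | LabR | LabLR
datatype color = Red | Blue

(* A row: set of columns where it has a 1, optional label, optional colour *)
type_synonym erow = "nat set \<times> label option \<times> color option"

(* An enriched matrix: number of columns (columns are 0..<ncols) and list of rows *)
record emat =
  ncols :: nat
  rows :: "erow list"

definition ones :: "erow \<Rightarrow> nat set" where "ones r = fst r"
definition lab :: "erow \<Rightarrow> label option" where "lab r = fst (snd r)"
definition col :: "erow \<Rightarrow> color option" where "col r = snd (snd r)"

definition enriched :: "emat \<Rightarrow> bool" where
  "enriched A \<longleftrightarrow>
     (\<forall>r\<in>set (rows A). ones r \<subseteq> {0..<ncols A}) \<and>
     (\<forall>r\<in>set (rows A). col r \<noteq> None \<longrightarrow>
         (lab r = Some LabL \<or> lab r = Some LabR \<or> (lab r = Some LabLR \<and> ones r = {}))) \<and>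
     (\<forall>r\<in>set (rows A). \<forall>s\<in>set (rows A).
         lab r = Some LabLR \<and> ones r = {} \<and> lab s = Some LabLR \<and> ones s = {} \<longrightarrow>
         col r \<noteq> None \<and> col r = col s)"

(* An ordering of the columns: p i is the column in position i (positions 0..<n) *)
definition positions :: "nat \<Rightarrow> (nat \<Rightarrow> nat) \<Rightarrow> nat set \<Rightarrow> nat set" where
  "positions n p S = {i. i < n \<and> p i \<in> S}"

definition consec :: "nat set \<Rightarrow> bool" where
  "consec P \<longleftrightarrow> (\<forall>i j k. i \<in> P \<and> k \<in> P \<and> i \<le> j \<and> j \<le> k \<longrightarrow> j \<in> P)"

definition LR_ordering :: "emat \<Rightarrow> (nat \<Rightarrow> nat) \<Rightarrow> bool" where
  "LR_ordering A p \<longleftrightarrow>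
     bij_betw p {0..<ncols A} {0..<ncols A} \<and>
     (\<forall>r\<in>set (rows A). lab r \<noteq> Some LabLR \<longrightarrow> consec (positions (ncols A) p (ones r))) \<and>
     (\<forall>r\<in>set (rows A). lab r = Some LabL \<and> ones r \<noteq> {} \<longrightarrow>
         0 \<in> positions (ncols A) p (ones r)) \<and>
     (\<forall>r\<in>set (rows A). lab r = Some LabR \<and> ones r \<noteq> {} \<longrightarrow>
         ncols A - 1 \<in> positions (ncols A) p (ones r)) \<and>
     (\<forall>r\<in>set (rows A). lab r = Some LabLR \<longrightarrow>
         consec (positions (ncols A) p ({0..<ncols A} - ones r)))"

definition Lblock :: "nat \<Rightarrow> (nat \<Rightarrow> nat) \<Rightarrow> nat set \<Rightarrow> nat set" where
  "Lblock n p S = p ` {i. i < n \<and> (\<forall>j\<le>i. p j \<in> S)}"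

definition Rblock :: "nat \<Rightarrow> (nat \<Rightarrow> nat) \<Rightarrow> nat set \<Rightarrow> nat set" where
  "Rblock n p S = p ` {i. i < n \<and> (\<forall>j. i \<le> j \<and> j < n \<longrightarrow> p j \<in> S)}"

(* an LR-row has exactly two blocks: 1 in first and last column, and not all columns are 1 *)
definition two_blocks :: "nat \<Rightarrow> (nat \<Rightarrow> nat) \<Rightarrow> nat set \<Rightarrow> bool" where
  "two_blocks n p S \<longleftrightarrow> 0 < n \<and> p 0 \<in> S \<and> p (n - 1) \<in> S \<and> \<not> {0..<n} \<subseteq> S"

definition suitable_LR_ordering :: "emat \<Rightarrow> (nat \<Rightarrow> nat) \<Rightarrow> bool" where
  "suitable_LR_ordering A p \<longleftrightarrow> LR_ordering A p \<and>
     (let n = ncols A in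
     (\<forall>r\<in>set (rows A). \<forall>s\<in>set (rows A).
        lab r = Some LabLR \<and> two_blocks n p (ones r) \<and> lab s \<in> {Some LabR, Some LabLR} \<longrightarrow>
        Lblock n p (ones r) \<inter> Rblock n p (ones s) = {}) \<and>
     (\<forall>r\<in>set (rows A). \<forall>s\<in>set (rows A).
        lab r = Some LabLR \<and> two_blocks n p (ones r) \<and> lab s \<in> {Some LabL, Some LabLR} \<longrightarrow>
        Rblock n p (ones r) \<inter> Lblock n p (ones s) = {}) \<and>
     (\<forall>r\<in>set (rows A). \<forall>u\<in>set (rows A).
        lab r = Some LabLR \<and> lab u = None \<longrightarrow>
        ones u \<inter> Lblock n p (ones r) = {} \<or> ones u \<inter> Rblock n p (ones r) = {}))"

definition subconf :: "emat \<Rightarrow> emat \<Rightarrow> bool" where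
  "subconf B A \<longleftrightarrow> (\<exists>f g.
      inj_on f {0..<length (rows B)} \<and> f ` {0..<length (rows B)} \<subseteq> {0..<length (rows A)} \<and>
      inj_on g {0..<ncols B} \<and> g ` {0..<ncols B} \<subseteq> {0..<ncols A} \<and>
      (\<forall>i<length (rows B).
         lab (rows B ! i) = lab (rows A ! f i) \<and> col (rows B ! i) = col (rows A ! f i) \<and>
         (\<forall>c<ncols B. c \<in> ones (rows B ! i) \<longleftrightarrow> g c \<in> ones (rows A ! f i))))"

definition of01 :: "nat \<Rightarrow> nat list list \<Rightarrow> emat" where
  "of01 k xss = \<lparr> ncols = k,
      rows = map (\<lambda>xs. ({j. j < length xs \<and> xs ! j = 1}, None, None)) xss \<rparr>"

definition M0 :: emat where
  "M0 = of01 4 [[1,0,1,1],[1,1,1,0],[0,1,1,1]]"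

definition MII4 :: emat where
  "MII4 = of01 4 [[0,1,1,1],[1,1,0,0],[0,1,1,0],[1,1,0,1]]"

definition MV :: emat where
  "MV = of01 5 [[1,1,0,0,0],[0,0,1,1,0],[1,1,1,1,0],[1,0,0,1,1]]"

(* S_0(k), 0-based columns: first row all ones, rows j (1<=j<=k-1) have ones in columns
   j-1, j, last row has ones in columns 0 and k-1 *)
definition S0 :: "nat \<Rightarrow> emat" where
  "S0 k = \<lparr> ncols = k,
     rows = [({0..<k}, None, None)] @ map (\<lambda>j. ({j - 1, j}, None, None)) [1..<k]
            @ [({0, k - 1}, None, None)] \<rparr>"

end

theory Submission
  imports Defs
begin

text \<open>
  All four matrices have only unlabeled rows. An LR-ordering of A makes the 1's of every
  non-LR-row of A consecutive, so restricting it to the columns of a subconfiguration gives a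
  column order in which every unlabeled row has consecutive 1's: each forbidden matrix would
  have the consecutive-ones property. None has it. In M0, MII(4) and MV a column outside a row
  must lie on one side of the whole row, and a few such constraints are already contradictory.
  The rows of size two of S0(k) form a cycle through all columns; the first column would have
  two neighbours on it, and the earlier of the two separates the first column from the other.
\<close>

definition c1p_ordering :: "emat \<Rightarrow> (nat \<Rightarrow> nat) \<Rightarrow> bool" where
  "c1p_ordering B q \<longleftrightarrow> inj_on q {0..<ncols B} \<and>
     (\<forall>r\<in>set (rows B). \<forall>a b c. a < ncols B \<longrightarrow> b < ncols B \<longrightarrow> c < ncols B \<longrightarrow>
        a \<in> ones r \<longrightarrow> c \<in> ones r \<longrightarrow> q a < q b \<longrightarrow> q b < q c \<longrightarrow> b \<in> ones r)"

definition c1p :: "emat \<Rightarrow> bool" where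
  "c1p B \<longleftrightarrow> (\<exists>q. c1p_ordering B q)"

lemma c1p_ordering_betweenD:
  assumes "c1p_ordering B q" "r \<in> set (rows B)" "a \<in> ones r" "c \<in> ones r" "b \<notin> ones r"
    "a < ncols B" "b < ncols B" "c < ncols B"
  shows "\<not> (q a < q b \<and> q b < q c)"
  using assms unfolding c1p_ordering_def by blast

lemma c1p_ordering_distinct:
  "c1p_ordering B q \<Longrightarrow> a < ncols B \<Longrightarrow> b < ncols B \<Longrightarrow> a \<noteq> b \<Longrightarrow> q a \<noteq> q b"
  unfolding c1p_ordering_def by (auto dest: inj_onD)

lemma the_inv_into_in_positions_iff:
  assumes "bij_betw p {0..<n} {0..<n}" "x < n"
  shows "the_inv_into {0..<n} p x \<in> positions n p S \<longleftrightarrow> x \<in> S"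
  using assms bij_betw_the_inv_into[OF assms(1)] f_the_inv_into_f_bij_betw[OF assms(1)]
  unfolding positions_def bij_betw_def by auto

lemma LR_ordering_subconf_c1p:
  assumes lr: "LR_ordering A p" and sc: "subconf B A"
    and nonLR: "\<forall>r\<in>set (rows B). lab r \<noteq> Some LabLR"
  shows "c1p B"
proof -
  let ?n = "ncols A"
  from sc obtain f g where
    f: "f ` {0..<length (rows B)} \<subseteq> {0..<length (rows A)}" and
    g: "inj_on g {0..<ncols B}" "g ` {0..<ncols B} \<subseteq> {0..<?n}" and
    fg: "\<forall>i<length (rows B). lab (rows B ! i) = lab (rows A ! f i) \<and>
         col (rows B ! i) = col (rows A ! f i) \<and>
         (\<forall>c<ncols B. c \<in> ones (rows B ! i) \<longleftrightarrow> g c \<in> ones (rows A ! f i))"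
    unfolding subconf_def by (elim exE conjE) (rule that)
  from lr have bij: "bij_betw p {0..<?n} {0..<?n}"
    and cons: "\<And>r. r \<in> set (rows A) \<Longrightarrow> lab r \<noteq> Some LabLR \<Longrightarrow> consec (positions ?n p (ones r))"
    unfolding LR_ordering_def by blast+
  define pos where "pos = the_inv_into {0..<?n} p"
  have pos_bij: "bij_betw pos {0..<?n} {0..<?n}"
    unfolding pos_def by (rule bij_betw_the_inv_into[OF bij])
  have gn: "g c < ?n" if "c < ncols B" for c
    using g(2) that by (auto simp: image_subset_iff)
  have "c1p_ordering B (pos \<circ> g)"
    unfolding c1p_ordering_def
  proof (intro conjI ballI allI impI)
    show "inj_on (pos \<circ> g) {0..<ncols B}"
      using g pos_bij by (metis bij_betw_def comp_inj_on inj_on_subset)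
  next
    fix r a b c
    assume r: "r \<in> set (rows B)" and cols: "a < ncols B" "b < ncols B" "c < ncols B"
      and ac: "a \<in> ones r" "c \<in> ones r"
      and order: "(pos \<circ> g) a < (pos \<circ> g) b" "(pos \<circ> g) b < (pos \<circ> g) c"
    obtain i where i: "i < length (rows B)" "r = rows B ! i"
      using r by (auto simp: in_set_conv_nth)
    let ?s = "rows A ! f i"
    have s: "?s \<in> set (rows A)" "lab ?s \<noteq> Some LabLR"
      using f i fg nonLR r by (auto simp: image_subset_iff)
    have ones_s: "x \<in> ones r \<longleftrightarrow> pos (g x) \<in> positions ?n p (ones ?s)" if "x < ncols B" for x
      using fg i the_inv_into_in_positions_iff[OF bij gn[OF that], folded pos_def] that by simp
    have "pos (g a) \<in> positions ?n p (ones ?s)" "pos (g c) \<in> positions ?n p (ones ?s)"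
      using ones_s cols ac by auto
    then have "pos (g b) \<in> positions ?n p (ones ?s)"
      using cons[OF s] order unfolding consec_def comp_def by (meson less_imp_le)
    then show "b \<in> ones r"
      using ones_s cols by blast
  qed
  then show ?thesis unfolding c1p_def by blast
qed

lemma c1p_ordering_outside_row:
  assumes q: "c1p_ordering B q" and r: "r \<in> set (rows B)" "ones r \<subseteq> {0..<ncols B}"
    and b: "b < ncols B" "b \<notin> ones r"
  shows "(\<forall>a\<in>ones r. q a < q b) \<or> (\<forall>a\<in>ones r. q b < q a)"
proof (rule ccontr)
  assume "\<not> ?thesis"
  then obtain a c where ac: "a \<in> ones r" "c \<in> ones r" "q b \<le> q a" "q c \<le> q b"
    by (meson not_less)
  moreover have "a < ncols B" "c < ncols B"
    using ac r(2) by auto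
  moreover have "a \<noteq> b" "c \<noteq> b"
    using ac b(2) by auto
  ultimately have "q c < q b" "q b < q a"
    using c1p_ordering_distinct[OF q] b(1) by (metis le_neq_implies_less)+
  then show False
    using c1p_ordering_betweenD[OF q r(1) ac(2,1) b(2)] ac b(1) \<open>a < ncols B\<close> \<open>c < ncols B\<close> by blast
qed

lemma rows_M0: "rows M0 = [({0,2,3}, None, None), ({0,1,2}, None, None), ({1,2,3}, None, None)]"
  by (auto simp: M0_def of01_def numeral_eq_Suc less_Suc_eq)

lemma rows_MII4: "rows MII4 =
  [({1,2,3}, None, None), ({0,1}, None, None), ({1,2}, None, None), ({0,1,3}, None, None)]"
  by (auto simp: MII4_def of01_def numeral_eq_Suc less_Suc_eq)

lemma rows_MV: "rows MV =
  [({0,1}, None, None), ({2,3}, None, None), ({0,1,2,3}, None, None), ({0,3,4}, None, None)]"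
  by (auto simp: MV_def of01_def numeral_eq_Suc less_Suc_eq)

lemma ncols_M0: "ncols M0 = 4"
  by (simp add: M0_def of01_def)

lemma not_c1p_M0: "\<not> c1p M0"
proof
  assume "c1p M0"
  then obtain q where q: "c1p_ordering M0 q" unfolding c1p_def ..
  note outside = c1p_ordering_outside_row[OF q]
  have "(\<forall>a\<in>{0,2,3}. q a < q 1) \<or> (\<forall>a\<in>{0,2,3}. q 1 < q a)"
    using outside[of "rows M0 ! 0" 1] by (simp add: rows_M0 ncols_M0 ones_def)
  moreover have "(\<forall>a\<in>{0,1,2}. q a < q 3) \<or> (\<forall>a\<in>{0,1,2}. q 3 < q a)"
    using outside[of "rows M0 ! 1" 3] by (simp add: rows_M0 ncols_M0 ones_def)
  moreover have "(\<forall>a\<in>{1,2,3}. q a < q 0) \<or> (\<forall>a\<in>{1,2,3}. q 0 < q a)"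
    using outside[of "rows M0 ! 2" 0] by (simp add: rows_M0 ncols_M0 ones_def)
  ultimately show False by (elim disjE) auto
qed

lemma ncols_MII4: "ncols MII4 = 4"
  by (simp add: MII4_def of01_def)

lemma not_c1p_MII4: "\<not> c1p MII4"
proof
  assume "c1p MII4"
  then obtain q where q: "c1p_ordering MII4 q" unfolding c1p_def ..
  note outside = c1p_ordering_outside_row[OF q]
  have "(\<forall>a\<in>{1,2,3}. q a < q 0) \<or> (\<forall>a\<in>{1,2,3}. q 0 < q a)"
    using outside[of "rows MII4 ! 0" 0] by (simp add: rows_MII4 ncols_MII4 ones_def)
  moreover have "(\<forall>a\<in>{0,1,3}. q a < q 2) \<or> (\<forall>a\<in>{0,1,3}. q 2 < q a)"
    using outside[of "rows MII4 ! 3" 2] by (simp add: rows_MII4 ncols_MII4 ones_def)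
  moreover have "(\<forall>a\<in>{0,1}. q a < q 3) \<or> (\<forall>a\<in>{0,1}. q 3 < q a)"
    using outside[of "rows MII4 ! 1" 3] by (simp add: rows_MII4 ncols_MII4 ones_def)
  moreover have "(\<forall>a\<in>{1,2}. q a < q 3) \<or> (\<forall>a\<in>{1,2}. q 3 < q a)"
    using outside[of "rows MII4 ! 2" 3] by (simp add: rows_MII4 ncols_MII4 ones_def)
  \<comment> \<open>0 and 2 are the two ends, so 3 lies between them and separates 1 from 0 or from 2\<close>
  ultimately show False by (elim disjE) auto
qed

lemma ncols_MV: "ncols MV = 5"
  by (simp add: MV_def of01_def)

lemma not_c1p_MV: "\<not> c1p MV"
proof
  assume "c1p MV"
  then obtain q where q: "c1p_ordering MV q" unfolding c1p_def ..
  note outside = c1p_ordering_outside_row[OF q]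
  have "(\<forall>a\<in>{0,1,2,3}. q a < q 4) \<or> (\<forall>a\<in>{0,1,2,3}. q 4 < q a)"
    using outside[of "rows MV ! 2" 4] by (simp add: rows_MV ncols_MV ones_def)
  moreover have "(\<forall>a\<in>{0,3,4}. q a < q 1) \<or> (\<forall>a\<in>{0,3,4}. q 1 < q a)"
    using outside[of "rows MV ! 3" 1] by (simp add: rows_MV ncols_MV ones_def)
  moreover have "(\<forall>a\<in>{0,3,4}. q a < q 2) \<or> (\<forall>a\<in>{0,3,4}. q 2 < q a)"
    using outside[of "rows MV ! 3" 2] by (simp add: rows_MV ncols_MV ones_def)
  moreover have "(\<forall>a\<in>{0,1}. q a < q 3) \<or> (\<forall>a\<in>{0,1}. q 3 < q a)"
    using outside[of "rows MV ! 0" 3] by (simp add: rows_MV ncols_MV ones_def)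
  moreover have "(\<forall>a\<in>{2,3}. q a < q 0) \<or> (\<forall>a\<in>{2,3}. q 0 < q a)"
    using outside[of "rows MV ! 1" 0] by (simp add: rows_MV ncols_MV ones_def)
  \<comment> \<open>if 4 is last, 1 and 2 precede 0 and 3; then 3 follows 0 and 0 follows 3\<close>
  ultimately show False by (elim disjE) auto
qed

lemma c1p_ordering_first_column_unique_partner:
  assumes q: "c1p_ordering B q"
    and rows: "{m, a} \<in> ones ` set (rows B)" "{m, b} \<in> ones ` set (rows B)"
    and cols: "m < ncols B" "a < ncols B" "b < ncols B" "m \<noteq> a" "m \<noteq> b"
    and first: "\<forall>c<ncols B. q m \<le> q c"
  shows "a = b"
proof (rule ccontr)
  assume "a \<noteq> b"
  have after_m: "q m < q c" if "c < ncols B" "c \<noteq> m" for c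
    using first that c1p_ordering_distinct[OF q] cols(1) by (metis le_neq_implies_less)
  have before: "q x < q y"
    if row: "{m, x} \<in> ones ` set (rows B)"
      and xy: "x < ncols B" "y < ncols B" "y \<noteq> m" "y \<noteq> x" for x y
  proof -
    obtain r where r: "r \<in> set (rows B)" "ones r = {m, x}"
      using row by blast
    have "(\<forall>c\<in>{m, x}. q c < q y) \<or> (\<forall>c\<in>{m, x}. q y < q c)"
      using c1p_ordering_outside_row[OF q r(1), of y] r(2) xy cols(1) by auto
    then show ?thesis
      using after_m[OF xy(2,3)] by auto
  qed
  show False
    using before[OF rows(1) cols(2,3)] before[OF rows(2) cols(3,2)] cols \<open>a \<noteq> b\<close> by auto
qed

lemma ncols_S0: "ncols (S0 k) = k"
  by (simp add: S0_def)

lemma S0_path_row: "1 \<le> j \<Longrightarrow> j < k \<Longrightarrow> {j - 1, j} \<in> ones ` set (rows (S0 k))"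
  by (force simp: S0_def ones_def)

lemma S0_closing_row: "{0, k - 1} \<in> ones ` set (rows (S0 k))"
  by (force simp: S0_def ones_def)

lemma S0_cycle_neighbours:
  assumes "3 \<le> k" "m < k"
  obtains a b where "a \<noteq> b" "a < k" "b < k" "m \<noteq> a" "m \<noteq> b"
    "{m, a} \<in> ones ` set (rows (S0 k))" "{m, b} \<in> ones ` set (rows (S0 k))"
proof -
  consider "m = 0" | "m = k - 1" | "0 < m" "m < k - 1"
    using assms by linarith
  then show thesis
  proof cases
    case 1
    then show thesis
      using that[of 1 "k - 1"] S0_path_row[of 1 k] S0_closing_row[of k] assms by simp
  next
    case 2
    then show thesis
      using that[of "k - 2" 0] S0_path_row[of "k - 1" k] S0_closing_row[of k] assms
      by (simp add: insert_commute numeral_2_eq_2 Suc_diff_Suc)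
  next
    case 3
    then show thesis
      using that[of "m - 1" "m + 1"] S0_path_row[of m k] S0_path_row[of "m + 1" k]
      by (simp add: insert_commute)
  qed
qed

lemma not_c1p_S0:
  assumes "3 \<le> k"
  shows "\<not> c1p (S0 k)"
proof
  assume "c1p (S0 k)"
  then obtain q where q: "c1p_ordering (S0 k) q" unfolding c1p_def ..
  obtain m where m: "m < k" "\<forall>c<k. q m \<le> q c"
    using ex_has_least_nat[of "\<lambda>c. c < k" 0 q] assms by auto
  obtain a b where "a \<noteq> b" "a < k" "b < k" "m \<noteq> a" "m \<noteq> b"
    "{m, a} \<in> ones ` set (rows (S0 k))" "{m, b} \<in> ones ` set (rows (S0 k))"
    using S0_cycle_neighbours[OF assms m(1)] .
  then show False
    using c1p_ordering_first_column_unique_partner[OF q, of m a b] m by (simp add: ncols_S0)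
qed

theorem mainTheorem2:
  assumes "enriched A"
    and "\<exists>p. suitable_LR_ordering A p"
  shows "\<not> subconf M0 A \<and> \<not> subconf MII4 A \<and> \<not> subconf MV A \<and>
         (\<forall>k::nat. even k \<and> k \<ge> 4 \<longrightarrow> \<not> subconf (S0 k) A)"
proof -
  from assms(2) obtain p where p: "LR_ordering A p"
    unfolding suitable_LR_ordering_def by blast
  have no_subconf: "\<not> subconf B A" if "\<not> c1p B" "\<forall>r\<in>set (rows B). lab r = None" for B
    using LR_ordering_subconf_c1p[OF p] that by fastforce
  have "\<forall>r\<in>set (rows (S0 k)). lab r = None" for k
    by (auto simp: S0_def lab_def)
  then show ?thesis
    using no_subconf not_c1p_M0 not_c1p_MII4 not_c1p_MV not_c1p_S0
    by (simp add: rows_M0 rows_MII4 rows_MV lab_def)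
qed

end
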